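(* For every pure context $F$, term $t$ and variable $x\notin\mathrm{fv}(F)$, we have $(\lambda x.F[x])\,t \sim F[t]$.
   Context: The calculus $\lambda_{\mathcal S}$. Terms: $t ::= x \mid \lambda x.t \mid t\,t \mid \mathcal{S}k.t \mid \langle t\rangle$ (shift and reset); values: $v ::= \lambda x.t \mid x$. $\lambda x.t$ binds $x$, $\mathcal{S}k.t$ binds $k$; terms up to $\alpha$-conversion; $\mathrm{fv}$ free variables; capture-avoiding substitution $t\{v/x\}$. Pure contexts $F ::= [\,] \mid v\,F \mid F\,t$; evaluation contexts $E ::= [\,] \mid v\,E \mid E\,t \mid \langle E\rangle$. Reduction: $E[(\lambda x.t)\,v] \to E[t\{v/x\}]$; $E[\langle F[\mathcal{S}k.t]\rangle] \to E[\langle t\{\lambda x.\langle F[x]\rangle/k\}\rangle]$ ($x\notin\mathrm{fv}(F)$); $E[\langle v\rangle]\to E[v]$. $t\Downarrow t'$ iff $t\to^*t'$ and $t'$ irreducible. Normal forms: values, control stuck terms $F[\mathcal{S}k.t]$, open stuck terms $E[x\,v]$. Fresh: not free in the terms/contexts considered. Normal form bisimilarity $\sim$: for a relation $\mathcal R$ on terms, $E_0\mathrel{\mathcal R}E_1$ iff either $E_0=E_0'[\langle F_0\rangle]$, $E_1=E_1'[\langle F_1\rangle]$ ($F_i$ pure) with $E_0'[x]\mathrel{\mathcal R}E_1'[x]$ and $\langle F_0[x]\rangle\mathrel{\mathcal R}\langle F_1[x]\rangle$ ($x$ fresh), or $E_0=F_0$, $E_1=F_1$ pure with $F_0[x]\mathrel{\mathcal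 R}F_1[x]$ ($x$ fresh). $v\mathbin{@}y$ is $x\,y$ if $v=x$, $t\{y/x\}$ if $v=\lambda x.t$. $\mathcal R^{\mathrm{nf}}$ on normal forms: $v_0\mathrel{\mathcal R^{\mathrm{nf}}}v_1$ if $v_0\mathbin{@}x\mathrel{\mathcal R}v_1\mathbin{@}x$ ($x$ fresh); $F_0[\mathcal{S}k.t_0]\mathrel{\mathcal R^{\mathrm{nf}}}F_1[\mathcal{S}k.t_1]$ if $F_0\mathrel{\mathcal R}F_1$ and $\langle t_0\rangle\mathrel{\mathcal R}\langle t_1\rangle$; $E_0[x\,v_0]\mathrel{\mathcal R^{\mathrm{nf}}}E_1[x\,v_1]$ if $E_0\mathrel{\mathcal R}E_1$ and $v_0\mathrel{\mathcal R^{\mathrm{nf}}}v_1$. $\mathcal R$ is a normal form simulation if $t_0\mathrel{\mathcal R}t_1$ and $t_0\Downarrow t_0'$ imply $t_1\Downarrow t_1'$ with $t_0'\mathrel{\mathcal R^{\mathrm{nf}}}t_1'$; a bisimulation if $\mathcal R$ and $\mathcal R^{-1}$ are simulations; $\sim$ is the largest normal form bisimulation. *)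

theory Defs
  imports Main
begin

text \<open>Terms of lambda_S (shift/reset) with de Bruijn indices, so that terms are
  identified up to alpha-conversion. A variable is a natural number (de Bruijn index).\<close>

datatype trm = Var nat | Lam trm | App trm trm | Shift trm | Reset trm

fun is_val :: "trm \<Rightarrow> bool" where
  "is_val (Var _) = True"
| "is_val (Lam _) = True"
| "is_val _ = False"

primrec lift :: "nat \<Rightarrow> trm \<Rightarrow> trm" where
  "lift k (Var n) = (if n < k then Var n else Var (Suc n))"
| "lift k (Lam t) = Lam (lift (Suc k) t)"
| "lift k (App s t) = App (lift k s) (lift k t)"
| "lift k (Shift t) = Shift (lift (Suc k) t)"
| "lift k (Reset t) = Reset (lift k t)"

text \<open>subst k u t: capture-avoiding substitution of u for index k in t
  (indices above k are decremented, since the binder of k disappears).\<close>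
primrec subst :: "nat \<Rightarrow> trm \<Rightarrow> trm \<Rightarrow> trm" where
  "subst k u (Var n) = (if n < k then Var n else if n = k then u else Var (n - 1))"
| "subst k u (Lam t) = Lam (subst (Suc k) (lift 0 u) t)"
| "subst k u (App s t) = App (subst k u s) (subst k u t)"
| "subst k u (Shift t) = Shift (subst (Suc k) (lift 0 u) t)"
| "subst k u (Reset t) = Reset (subst k u t)"

text \<open>Contexts (they contain no binders around the hole).\<close>
datatype ctx = Hole | CAppR trm ctx | CAppL ctx trm | CReset ctx

primrec plug :: "ctx \<Rightarrow> trm \<Rightarrow> trm" where
  "plug Hole t = t"
| "plug (CAppR v E) t = App v (plug E t)"
| "plug (CAppL E s) t = App (plug E t) s"
| "plug (CReset E) t = Reset (plug E t)"

primrec comp :: "ctx \<Rightarrow> ctx \<Rightarrow> ctx" where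
  "comp Hole E' = E'"
| "comp (CAppR v E) E' = CAppR v (comp E E')"
| "comp (CAppL E s) E' = CAppL (comp E E') s"
| "comp (CReset E) E' = CReset (comp E E')"

primrec liftc :: "ctx \<Rightarrow> ctx" where
  "liftc Hole = Hole"
| "liftc (CAppR v E) = CAppR (lift 0 v) (liftc E)"
| "liftc (CAppL E s) = CAppL (liftc E) (lift 0 s)"
| "liftc (CReset E) = CReset (liftc E)"

primrec pure :: "ctx \<Rightarrow> bool" where
  "pure Hole = True"
| "pure (CAppR v F) = (is_val v \<and> pure F)"
| "pure (CAppL F s) = pure F"
| "pure (CReset F) = False"

primrec ectx :: "ctx \<Rightarrow> bool" where
  "ectx Hole = True"
| "ectx (CAppR v E) = (is_val v \<and> ectx E)"
| "ectx (CAppL E s) = ectx E"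
| "ectx (CReset E) = ectx E"

text \<open>Plugging a fresh variable x into a context: all free indices of the context are
  shifted up and the fresh variable is index 0.\<close>
definition plug_fresh :: "ctx \<Rightarrow> trm" where
  "plug_fresh E = plug (liftc E) (Var 0)"

inductive step :: "trm \<Rightarrow> trm \<Rightarrow> bool" where
  beta: "ectx E \<Longrightarrow> is_val v \<Longrightarrow> step (plug E (App (Lam t) v)) (plug E (subst 0 v t))"
| shift: "ectx E \<Longrightarrow> pure F \<Longrightarrow>
     step (plug E (Reset (plug F (Shift t))))
          (plug E (Reset (subst 0 (Lam (Reset (plug_fresh F))) t)))"
| reset: "ectx E \<Longrightarrow> is_val v \<Longrightarrow> step (plug E (Reset v)) (plug E v)"

definition irreducible :: "trm \<Rightarrow> bool" where
  "irreducible t \<longleftrightarrow> \<not> (\<exists>u. step t u)"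

definition eval :: "trm \<Rightarrow> trm \<Rightarrow> bool" where
  "eval t t' \<longleftrightarrow> step\<^sup>*\<^sup>* t t' \<and> irreducible t'"

text \<open>v @ x for a fresh variable x (index 0 after shifting): for v = \<lambda>x.t this is t
  (with x free); for v = y this is y x.\<close>
fun app_fresh :: "trm \<Rightarrow> trm" where
  "app_fresh (Lam t) = t"
| "app_fresh (Var n) = App (Var (Suc n)) (Var 0)"
| "app_fresh t = t"

definition ctx_rel :: "(trm \<Rightarrow> trm \<Rightarrow> bool) \<Rightarrow> ctx \<Rightarrow> ctx \<Rightarrow> bool" where
  "ctx_rel R E0 E1 \<longleftrightarrow>
     (\<exists>E0' F0 E1' F1. ectx E0' \<and> pure F0 \<and> ectx E1' \<and> pure F1 \<and>
        E0 = comp E0' (CReset F0) \<and> E1 = comp E1' (CReset F1) \<and>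
        R (plug_fresh E0') (plug_fresh E1') \<and>
        R (Reset (plug_fresh F0)) (Reset (plug_fresh F1)))
   \<or> (pure E0 \<and> pure E1 \<and> R (plug_fresh E0) (plug_fresh E1))"

definition val_rel :: "(trm \<Rightarrow> trm \<Rightarrow> bool) \<Rightarrow> trm \<Rightarrow> trm \<Rightarrow> bool" where
  "val_rel R v0 v1 \<longleftrightarrow> is_val v0 \<and> is_val v1 \<and> R (app_fresh v0) (app_fresh v1)"

definition nf_rel :: "(trm \<Rightarrow> trm \<Rightarrow> bool) \<Rightarrow> trm \<Rightarrow> trm \<Rightarrow> bool" where
  "nf_rel R a b \<longleftrightarrow>
     val_rel R a b
   \<or> (\<exists>F0 F1 t0 t1. pure F0 \<and> pure F1 \<and>
        a = plug F0 (Shift t0) \<and> b = plug F1 (Shift t1) \<and>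
        ctx_rel R F0 F1 \<and> R (Reset t0) (Reset t1))
   \<or> (\<exists>E0 E1 x v0 v1. ectx E0 \<and> ectx E1 \<and>
        a = plug E0 (App (Var x) v0) \<and> b = plug E1 (App (Var x) v1) \<and>
        ctx_rel R E0 E1 \<and> val_rel R v0 v1)"

definition nf_simulation :: "(trm \<Rightarrow> trm \<Rightarrow> bool) \<Rightarrow> bool" where
  "nf_simulation R \<longleftrightarrow>
     (\<forall>t0 t1 t0'. R t0 t1 \<and> eval t0 t0' \<longrightarrow> (\<exists>t1'. eval t1 t1' \<and> nf_rel R t0' t1'))"

definition nf_bisimulation :: "(trm \<Rightarrow> trm \<Rightarrow> bool) \<Rightarrow> bool" where
  "nf_bisimulation R \<longleftrightarrow> nf_simulation R \<and> nf_simulation (conversep R)"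

definition nf_bisimilar :: "trm \<Rightarrow> trm \<Rightarrow> bool" where
  "nf_bisimilar t0 t1 \<longleftrightarrow> (\<exists>R. nf_bisimulation R \<and> R t0 t1)"

end

theory Submission
  imports Defs
begin

text \<open>Since \<open>(\<lambda>x.F[x]) [ ]\<close> and \<open>F\<close> are pure contexts, both sides start by evaluating
  \<open>t\<close>. If \<open>t\<close> diverges, so do both sides. If \<open>t\<close> reaches a value \<open>v\<close>, the two sides
  meet in \<open>F[v]\<close> after one beta step, so by determinism of reduction they have the same
  normal form. If \<open>t\<close> gets stuck at \<open>G[Sk.s]\<close> or \<open>E[x v]\<close>, both sides get stuck with the
  surrounding contexts \<open>(\<lambda>x.F[x]) G\<close> and \<open>F[G]\<close> (resp. with \<open>E\<close> for \<open>G\<close>), whose instances at a fresh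
  variable again have the shape \<open>(\<lambda>x.F'[x]) t'\<close>, \<open>F'[t']\<close>. So the identity together with all
  such pairs and their converses is a normal form bisimulation.\<close>

lemma lift_lift: "i \<le> j \<Longrightarrow> lift (Suc j) (lift i w) = lift i (lift j w)"
  by (induction w arbitrary: i j) auto

lemma subst_lift: "subst k u (lift k w) = w"
  by (induction w arbitrary: k u) auto

lemma is_val_lift [simp]: "is_val (lift k v) = is_val v"
  by (cases v) auto

lemma plug_comp [simp]: "plug (comp E G) t = plug E (plug G t)"
  by (induction E) auto

lemma comp_assoc: "comp (comp E G) H = comp E (comp G H)"
  by (induction E) auto

lemma liftc_comp [simp]: "liftc (comp E G) = comp (liftc E) (liftc G)"
  by (induction E) auto

lemma pure_comp [simp]: "pure (comp E G) \<longleftrightarrow> pure E \<and> pure G"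
  by (induction E) auto

lemma ectx_comp [simp]: "ectx (comp E G) \<longleftrightarrow> ectx E \<and> ectx G"
  by (induction E) auto

lemma pure_liftc [simp]: "pure (liftc E) = pure E"
  by (induction E) auto

lemma pure_imp_ectx: "pure E \<Longrightarrow> ectx E"
  by (induction E) auto

lemma lift_plug_liftc:
  "lift (Suc 0) (plug (liftc F) s) = plug (liftc (liftc F)) (lift (Suc 0) s)"
  by (induction F) (auto simp: lift_lift)

lemma subst_plug_liftc: "subst 0 u (plug (liftc F) s) = plug F (subst 0 u s)"
  by (induction F) (auto simp: subst_lift)

lemma subst_plug_fresh: "subst 0 u (plug_fresh F) = plug F u"
  by (simp add: plug_fresh_def subst_plug_liftc)

lemma plug_fresh_CAppR_Lam:
  "plug_fresh (CAppR (Lam (plug_fresh F)) E) = App (Lam (plug_fresh (liftc F))) (plug_fresh E)"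
  by (simp add: plug_fresh_def lift_plug_liftc)

lemma plug_fresh_comp: "plug_fresh (comp F E) = plug (liftc F) (plug_fresh E)"
  by (simp add: plug_fresh_def)

lemma ectx_cases:
  assumes "ectx E"
  obtains "pure E" | E' F where "ectx E'" "pure F" "E = comp E' (CReset F)"
proof -
  have "pure E \<or> (\<exists>E' F. ectx E' \<and> pure F \<and> E = comp E' (CReset F))"
    using assms
  proof (induction E)
    case (CAppR v E)
    show ?case
    proof (cases "pure E")
      case False
      then obtain E' F where "ectx E'" "pure F" "E = comp E' (CReset F)"
        using CAppR by auto
      then show ?thesis
        using CAppR.prems by (intro disjI2 exI[of _ "CAppR v E'"] exI[of _ F]) simp
    qed (use CAppR.prems in simp)
  next
    case (CAppL E s)
    show ?case
    proof (cases "pure E")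
      case False
      then obtain E' F where "ectx E'" "pure F" "E = comp E' (CReset F)"
        using CAppL by auto
      then show ?thesis by (intro disjI2 exI[of _ "CAppL E' s"] exI[of _ F]) simp
    qed simp
  next
    case (CReset E)
    show ?case
    proof (cases "pure E")
      case True
      then show ?thesis by (intro disjI2 exI[of _ Hole] exI[of _ E]) simp
    next
      case False
      then obtain E' F where "ectx E'" "pure F" "E = comp E' (CReset F)"
        using CReset by auto
      then show ?thesis by (intro disjI2 exI[of _ "CReset E'"] exI[of _ F]) simp
    qed
  qed simp
  then show ?thesis using that by blast
qed

inductive contract :: "trm \<Rightarrow> trm \<Rightarrow> bool" where
  beta: "is_val v \<Longrightarrow> contract (App (Lam t) v) (subst 0 v t)"
| shift: "pure F \<Longrightarrow>
    contract (Reset (plug F (Shift t))) (Reset (subst 0 (Lam (Reset (plug_fresh F))) t))"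
| reset: "is_val v \<Longrightarrow> contract (Reset v) v"

lemma step_iff_contract:
  "step s s' \<longleftrightarrow> (\<exists>E r r'. ectx E \<and> contract r r' \<and> s = plug E r \<and> s' = plug E r')"
proof
  show "step s s' \<Longrightarrow> \<exists>E r r'. ectx E \<and> contract r r' \<and> s = plug E r \<and> s' = plug E r'"
    by (induction rule: step.induct) (blast intro: contract.intros)+
qed (auto elim!: contract.cases intro: step.intros)

definition head :: "trm \<Rightarrow> bool" where
  "head r \<longleftrightarrow> (\<exists>r'. contract r r') \<or> (\<exists>x v. is_val v \<and> r = App (Var x) v)"

lemma head_cases:
  assumes "head r"
  obtains t v where "is_val v" "r = App (Lam t) v"
  | F t where "pure F" "r = Reset (plug F (Shift t))"
  | v where "is_val v" "r = Reset v"
  | x v where "is_val v" "r = App (Var x) v"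
  using assms unfolding head_def by (auto elim: contract.cases)

lemma plug_head_not_val: "head r \<Longrightarrow> \<not> is_val (plug E r)"
  by (cases E) (auto elim: head_cases)

lemma plug_shift_not_val: "pure F \<Longrightarrow> \<not> is_val (plug F (Shift t))"
  by (cases F) auto

lemma plug_shift_neq_plug_head:
  "pure F \<Longrightarrow> ectx E \<Longrightarrow> head r \<Longrightarrow> plug F (Shift t) \<noteq> plug E r"
proof (induction F arbitrary: E)
  case Hole
  then show ?case by (cases E) (auto elim: head_cases)
next
  case (CAppR v F)
  then show ?case
    using plug_head_not_val[OF CAppR.prems(3)] plug_shift_not_val[of F t]
    by (cases E) (auto elim: head_cases)
next
  case (CAppL F s)
  then show ?case
    using plug_head_not_val[OF CAppL.prems(3)] plug_shift_not_val[of F t]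
    by (cases E) (auto elim: head_cases)
qed simp

lemma plug_shift_inject:
  "pure F \<Longrightarrow> pure F' \<Longrightarrow> plug F (Shift t) = plug F' (Shift t') \<Longrightarrow> F = F' \<and> t = t'"
proof (induction F arbitrary: F')
  case Hole
  then show ?case by (cases F') auto
next
  case (CAppR v F)
  then show ?case by (cases F') (auto dest: plug_shift_not_val)
next
  case (CAppL F s)
  then show ?case by (cases F') (auto dest: plug_shift_not_val)
qed simp

lemma head_plug_head_imp_Hole:
  assumes "head (plug E r)" "ectx E" "head r"
  shows "E = Hole"
  using assms(1)
proof (cases rule: head_cases)
  case (2 F t)
  have "plug E' r \<noteq> plug F (Shift t)" if "ectx E'" for E'
    using plug_shift_neq_plug_head[OF 2(1) that assms(3)] by metis
  then show ?thesis using 2 assms(2) by (cases E) auto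
qed (use plug_head_not_val[OF assms(3)] in \<open>cases E; auto dest: arg_cong[where f = is_val]\<close>)+

lemma plug_head_inject:
  "ectx E \<Longrightarrow> ectx E' \<Longrightarrow> head r \<Longrightarrow> head r' \<Longrightarrow> plug E r = plug E' r' \<Longrightarrow>
    E = E' \<and> r = r'"
proof (induction E arbitrary: E')
  case Hole
  then show ?case using head_plug_head_imp_Hole[of E' r'] by simp
next
  case (CAppR v E)
  then show ?case
    using head_plug_head_imp_Hole[of "CAppR v E" r] plug_head_not_val[OF CAppR.prems(4)]
    by (cases E') (auto dest: CAppR.IH)
next
  case (CAppL E s)
  then show ?case
    using head_plug_head_imp_Hole[of "CAppL E s" r] plug_head_not_val[OF CAppL.prems(3)]
    by (cases E') (auto dest: CAppL.IH)
next
  case (CReset E)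
  then show ?case
    using head_plug_head_imp_Hole[of "CReset E" r] by (cases E') (auto dest: CReset.IH)
qed

lemma contract_deterministic: "contract r s \<Longrightarrow> contract r s' \<Longrightarrow> s = s'"
  by (elim contract.cases) (auto dest: plug_shift_inject plug_shift_not_val)

lemma step_deterministic:
  assumes "step s s1" "step s s2"
  shows "s1 = s2"
proof -
  obtain E r r' where 1: "ectx E" "contract r r'" "s = plug E r" "s1 = plug E r'"
    using assms(1) by (auto simp: step_iff_contract)
  obtain E2 r2 r2' where 2: "ectx E2" "contract r2 r2'" "s = plug E2 r2" "s2 = plug E2 r2'"
    using assms(2) by (auto simp: step_iff_contract)
  have "E = E2" "r = r2"
    using plug_head_inject[of E E2 r r2] 1 2 by (auto simp: head_def)
  moreover have "r' = r2'"
    using 1(2) 2(2) \<open>r = r2\<close> contract_deterministic by blast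
  ultimately show ?thesis using 1 2 by simp
qed

lemma step_plug:
  assumes "step s s'" "ectx C"
  shows "step (plug C s) (plug C s')"
proof -
  obtain E r r' where "ectx E" "contract r r'" "s = plug E r" "s' = plug E r'"
    using assms(1) by (auto simp: step_iff_contract)
  then show ?thesis
    using assms(2) unfolding step_iff_contract
    by (intro exI[of _ "comp C E"] exI[of _ r] exI[of _ r']) simp
qed

lemma steps_plug: "step\<^sup>*\<^sup>* s s' \<Longrightarrow> ectx C \<Longrightarrow> step\<^sup>*\<^sup>* (plug C s) (plug C s')"
  by (induction rule: rtranclp_induct) (auto intro: rtranclp.rtrancl_into_rtrancl step_plug)

lemma irreducible_plugD: "irreducible (plug C s) \<Longrightarrow> ectx C \<Longrightarrow> irreducible s"
  unfolding irreducible_def using step_plug by blast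

definition control_stuck :: "trm \<Rightarrow> bool" where
  "control_stuck s \<longleftrightarrow> (\<exists>F t. pure F \<and> s = plug F (Shift t))"

definition open_stuck :: "trm \<Rightarrow> bool" where
  "open_stuck s \<longleftrightarrow> (\<exists>E x v. ectx E \<and> is_val v \<and> s = plug E (App (Var x) v))"

lemma control_stuck_plug: "control_stuck s \<Longrightarrow> pure C \<Longrightarrow> control_stuck (plug C s)"
  unfolding control_stuck_def by (metis plug_comp pure_comp)

lemma open_stuck_plug: "open_stuck s \<Longrightarrow> ectx C \<Longrightarrow> open_stuck (plug C s)"
  unfolding open_stuck_def by (metis plug_comp ectx_comp)

lemma control_stuck_irreducible:
  assumes "control_stuck s"
  shows "irreducible s"
proof -
  obtain F t where F: "pure F" "s = plug F (Shift t)"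
    using assms by (auto simp: control_stuck_def)
  have "\<not> contract r r'" if "ectx E" "s = plug E r" for E r r'
  proof
    assume "contract r r'"
    then have "head r" by (auto simp: head_def)
    then show False using plug_shift_neq_plug_head[OF F(1) that(1)] F(2) that(2) by metis
  qed
  then show ?thesis unfolding irreducible_def step_iff_contract by blast
qed

lemma open_stuck_irreducible:
  assumes "open_stuck s"
  shows "irreducible s"
proof -
  obtain E x v where E: "ectx E" "is_val v" "s = plug E (App (Var x) v)"
    using assms by (auto simp: open_stuck_def)
  have "\<not> contract r r'" if "ectx E'" "s = plug E' r" for E' r r'
  proof
    assume "contract r r'"
    then have "r = App (Var x) v"
      using plug_head_inject[of E E' "App (Var x) v" r] E that by (auto simp: head_def)
    with \<open>contract r r'\<close> show False by (auto elim: contract.cases)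
  qed
  then show ?thesis unfolding irreducible_def step_iff_contract by blast
qed

lemma Reset_reducible:
  assumes "is_val s \<or> control_stuck s"
  shows "\<not> irreducible (Reset s)"
  using assms
proof
  assume "control_stuck s"
  then obtain F t where "pure F" "s = plug F (Shift t)"
    by (auto simp: control_stuck_def)
  then show ?thesis using step.shift[of Hole F t] by (auto simp: irreducible_def)
qed (use step.reset[of Hole s] in \<open>auto simp: irreducible_def\<close>)

lemma irreducible_cases:
  assumes "irreducible s"
  obtains "is_val s" | "control_stuck s" | "open_stuck s"
  using assms
proof (induction s arbitrary: thesis)
  case (Shift t)
  then show ?case by (metis control_stuck_def plug.simps(1) pure.simps(1))
next
  case (Reset s)
  have "irreducible s"
    using Reset.prems irreducible_plugD[of "CReset Hole"] by simp
  then show ?case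
    using Reset.IH Reset.prems Reset_reducible open_stuck_plug[of s "CReset Hole"] by auto
next
  case (App s u)
  have "irreducible s"
    using App.prems irreducible_plugD[of "CAppL Hole u"] by simp
  then consider "is_val s" | "control_stuck s" | "open_stuck s"
    using App.IH(1) by blast
  then show ?case
  proof cases
    case 1
    have "irreducible u"
      using App.prems(4) irreducible_plugD[of "CAppR s Hole"] \<open>is_val s\<close> by simp
    then consider "is_val u" | "control_stuck u" | "open_stuck u"
      using App.IH(2) by blast
    then show ?thesis
    proof cases
      case 1
      then have "open_stuck (App s u)"
        using \<open>is_val s\<close> App.prems(4) step.beta[of Hole u]
        by (cases s) (auto simp: open_stuck_def irreducible_def intro!: exI[of _ Hole])
      then show ?thesis using App.prems(3) by blast
    qed (use \<open>is_val s\<close> App.prems(1-3) control_stuck_plug[of u "CAppR s Hole"]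
           open_stuck_plug[of u "CAppR s Hole"] in auto)
  qed (use App.prems(1-3) control_stuck_plug[of s "CAppL Hole u"]
         open_stuck_plug[of s "CAppL Hole u"] in auto)
qed simp_all

lemma steps_to_irreducible_confluent:
  assumes "step\<^sup>*\<^sup>* s u" "step\<^sup>*\<^sup>* s a" "irreducible a"
  shows "step\<^sup>*\<^sup>* u a"
  using assms
proof (induction rule: rtranclp_induct)
  case (step u u')
  then have "step\<^sup>*\<^sup>* u a" by blast
  then show ?case
    using step.hyps(2) step.prems(2)
    by (auto elim: converse_rtranclpE dest: step_deterministic simp: irreducible_def)
qed

lemma eval_irreducible: "irreducible s \<Longrightarrow> eval s a \<longleftrightarrow> a = s"
  by (auto simp: eval_def irreducible_def elim: converse_rtranclpE)

lemma eval_deterministic: "eval s a \<Longrightarrow> eval s b \<Longrightarrow> a = b"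
  by (metis eval_def eval_irreducible steps_to_irreducible_confluent)

lemma eval_plugD:
  assumes "eval (plug C s) a" "ectx C"
  shows "\<exists>s'. eval s s'"
proof -
  have "step\<^sup>*\<^sup>* r a \<Longrightarrow> r = plug C s \<Longrightarrow> \<exists>s'. eval s s'" for r
  proof (induction arbitrary: s rule: converse_rtranclp_induct)
    case base
    then show ?case
      using assms irreducible_plugD by (auto simp: eval_def)
  next
    case (step r r')
    show ?case
    proof (cases "irreducible s")
      case False
      then obtain s1 where "step s s1" by (auto simp: irreducible_def)
      then have "r' = plug C s1"
        using step.hyps(1) step.prems assms(2) step_plug step_deterministic by blast
      then show ?thesis
        using step.IH[of s1] \<open>step s s1\<close> by (auto simp: eval_def intro: converse_rtranclp_into_rtranclp)
    qed (auto simp: eval_def)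
  qed
  then show ?thesis using assms(1) by (auto simp: eval_def)
qed

lemma ctx_rel_refl:
  assumes "\<And>s. R s s" "ectx E"
  shows "ctx_rel R E E"
  using assms(2)
proof (cases rule: ectx_cases)
  case (2 E' F)
  then show ?thesis
    unfolding ctx_rel_def using assms(1)
    by (intro disjI1 exI[of _ E'] exI[of _ F] exI[of _ E'] exI[of _ F]) simp
qed (simp add: ctx_rel_def assms(1))

lemma ctx_rel_conversep: "ctx_rel R E0 E1 \<Longrightarrow> ctx_rel (conversep R) E1 E0"
  unfolding ctx_rel_def by auto

lemma nf_rel_refl:
  assumes "\<And>s. R s s" "irreducible a"
  shows "nf_rel R a a"
  using assms(2)
proof (cases rule: irreducible_cases)
  case 1
  then show ?thesis using assms(1) by (simp add: nf_rel_def val_rel_def)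
next
  case 2
  then obtain F t where "pure F" "a = plug F (Shift t)"
    by (auto simp: control_stuck_def)
  moreover have "ctx_rel R F F"
    using ctx_rel_refl assms(1) pure_imp_ectx \<open>pure F\<close> by blast
  ultimately show ?thesis using assms(1) unfolding nf_rel_def by blast
next
  case 3
  then obtain E x v where "ectx E" "is_val v" "a = plug E (App (Var x) v)"
    by (auto simp: open_stuck_def)
  moreover have "ctx_rel R E E"
    using ctx_rel_refl assms(1) \<open>ectx E\<close> by blast
  ultimately show ?thesis using assms(1) unfolding nf_rel_def val_rel_def by blast
qed

lemma eval_plug_pure_simulation:
  assumes "pure C0" "pure C1"
    and join: "\<And>v. is_val v \<Longrightarrow> \<exists>u. step\<^sup>*\<^sup>* (plug C0 v) u \<and> step\<^sup>*\<^sup>* (plug C1 v) u"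
    and rel: "\<And>E. ectx E \<Longrightarrow> ctx_rel R (comp C0 E) (comp C1 E)"
    and refl: "\<And>s. R s s"
    and eval0: "eval (plug C0 t) a"
  shows "\<exists>b. eval (plug C1 t) b \<and> nf_rel R a b"
proof -
  have ectx: "ectx C0" "ectx C1" using assms(1,2) by (simp_all add: pure_imp_ectx)
  obtain t' where "eval t t'"
    using eval_plugD eval0 ectx(1) by blast
  then have steps: "step\<^sup>*\<^sup>* (plug C0 t) (plug C0 t')" "step\<^sup>*\<^sup>* (plug C1 t) (plug C1 t')"
    using steps_plug ectx by (auto simp: eval_def)
  from \<open>eval t t'\<close> have "irreducible t'" by (simp add: eval_def)
  then consider "is_val t'" | "control_stuck t'" | "open_stuck t'"
    by (rule irreducible_cases)
  then show ?thesis
  proof cases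
    case 1
    then obtain u where "step\<^sup>*\<^sup>* (plug C0 t') u" "step\<^sup>*\<^sup>* (plug C1 t') u"
      using join by blast
    then have "eval (plug C1 t) a"
      using steps eval0 steps_to_irreducible_confluent unfolding eval_def
      by (meson rtranclp_trans)
    then show ?thesis using refl nf_rel_refl eval0 by (auto simp: eval_def)
  next
    case 2
    then obtain G s where G: "pure G" "t' = plug G (Shift s)"
      by (auto simp: control_stuck_def)
    have "irreducible (plug C0 t')" "irreducible (plug C1 t')"
      using 2 assms(1,2) control_stuck_plug control_stuck_irreducible by blast+
    then have "a = plug C0 t'" "eval (plug C1 t) (plug C1 t')"
      using steps eval0 eval_deterministic by (auto simp: eval_def)
    moreover have "ctx_rel R (comp C0 G) (comp C1 G)"
      using rel G pure_imp_ectx by blast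
    ultimately show ?thesis
      using G assms(1,2) refl unfolding nf_rel_def by (metis plug_comp pure_comp)
  next
    case 3
    then obtain E x v where E: "ectx E" "is_val v" "t' = plug E (App (Var x) v)"
      by (auto simp: open_stuck_def)
    have "irreducible (plug C0 t')" "irreducible (plug C1 t')"
      using 3 ectx open_stuck_plug open_stuck_irreducible by blast+
    then have "a = plug C0 t'" "eval (plug C1 t) (plug C1 t')"
      using steps eval0 eval_deterministic by (auto simp: eval_def)
    moreover have "ctx_rel R (comp C0 E) (comp C1 E)" "val_rel R v v"
      using rel E refl by (auto simp: val_rel_def)
    ultimately show ?thesis
      using E ectx unfolding nf_rel_def by (metis plug_comp ectx_comp)
  qed
qed

definition beta_expansion :: "trm \<Rightarrow> trm \<Rightarrow> bool" where
  "beta_expansion s s' \<longleftrightarrow> (\<exists>F t. pure F \<and> s = App (Lam (plug_fresh F)) t \<and> s' = plug F t)"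

definition beta_expansion_bisim :: "trm \<Rightarrow> trm \<Rightarrow> bool" where
  "beta_expansion_bisim s s' \<longleftrightarrow> s = s' \<or> beta_expansion s s' \<or> beta_expansion s' s"

lemma conversep_beta_expansion_bisim: "conversep beta_expansion_bisim = beta_expansion_bisim"
  by (intro ext) (auto simp: beta_expansion_bisim_def)

lemma ctx_rel_beta_expansion:
  assumes "pure F" "ectx E" "\<And>s. R s s" "\<And>s s'. beta_expansion s s' \<Longrightarrow> R s s'"
  shows "ctx_rel R (CAppR (Lam (plug_fresh F)) E) (comp F E)"
proof -
  have fresh: "R (plug_fresh (CAppR (Lam (plug_fresh F)) G)) (plug_fresh (comp F G))" for G
    using assms(1,4) unfolding beta_expansion_def
    by (metis plug_fresh_CAppR_Lam plug_fresh_comp pure_liftc)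
  from \<open>ectx E\<close> show ?thesis
  proof (cases rule: ectx_cases)
    case 1
    then show ?thesis using assms(1) fresh by (simp add: ctx_rel_def)
  next
    case (2 E' G)
    then show ?thesis
      unfolding ctx_rel_def
      by (intro disjI1 exI[of _ "CAppR (Lam (plug_fresh F)) E'"] exI[of _ G]
          exI[of _ "comp F E'"] exI[of _ G]) (simp add: assms(1,3) fresh comp_assoc pure_imp_ectx)
  qed
qed

lemma step_Lam_plug_fresh: "is_val v \<Longrightarrow> step (App (Lam (plug_fresh F)) v) (plug F v)"
  using step.beta[of Hole v "plug_fresh F"] by (simp add: subst_plug_fresh)

lemma nf_simulation_beta_expansion_bisim: "nf_simulation beta_expansion_bisim"
  unfolding nf_simulation_def
proof (intro allI impI, elim conjE)
  fix t0 t1 a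
  assume "beta_expansion_bisim t0 t1" "eval t0 a"
  let ?R = beta_expansion_bisim
  have refl: "?R s s" for s by (simp add: beta_expansion_bisim_def)
  have rel: "ctx_rel ?R (comp (CAppR (Lam (plug_fresh F)) Hole) E) (comp F E)"
    if "pure F" "ectx E" for F E
    using ctx_rel_beta_expansion[where R = ?R, OF that refl] by (simp add: beta_expansion_bisim_def)
  have rel': "ctx_rel ?R (comp F E) (comp (CAppR (Lam (plug_fresh F)) Hole) E)"
    if "pure F" "ectx E" for F E
    using ctx_rel_conversep[OF rel[OF that]] conversep_beta_expansion_bisim by simp
  have join: "\<exists>u. step\<^sup>*\<^sup>* (plug (CAppR (Lam (plug_fresh F)) Hole) v) u \<and> step\<^sup>*\<^sup>* (plug F v) u"
    if "is_val v" for F v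
    using step_Lam_plug_fresh[OF that] by auto
  consider "t0 = t1" | F t where "pure F" "t0 = plug (CAppR (Lam (plug_fresh F)) Hole) t"
      "t1 = plug F t"
    | F t where "pure F" "t1 = plug (CAppR (Lam (plug_fresh F)) Hole) t" "t0 = plug F t"
    using \<open>?R t0 t1\<close> by (auto simp: beta_expansion_bisim_def beta_expansion_def)
  then show "\<exists>t1'. eval t1 t1' \<and> nf_rel ?R a t1'"
  proof cases
    case 1
    then show ?thesis using \<open>eval t0 a\<close> nf_rel_refl refl by (auto simp: eval_def)
  next
    case 2
    then show ?thesis
      using eval_plug_pure_simulation[OF _ \<open>pure F\<close> join rel refl] \<open>eval t0 a\<close> by simp
  next
    case 3
    then show ?thesis
      using eval_plug_pure_simulation[OF \<open>pure F\<close> _ _ rel' refl] join \<open>eval t0 a\<close>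
      by (simp add: conj_commute)
  qed
qed

theorem lemma5:
  assumes "pure F"
  shows "nf_bisimilar (App (Lam (plug_fresh F)) t) (plug F t)"
proof -
  have "nf_bisimulation beta_expansion_bisim"
    using nf_simulation_beta_expansion_bisim conversep_beta_expansion_bisim
    by (simp add: nf_bisimulation_def)
  moreover have "beta_expansion_bisim (App (Lam (plug_fresh F)) t) (plug F t)"
    using assms by (auto simp: beta_expansion_bisim_def beta_expansion_def)
  ultimately show ?thesis
    unfolding nf_bisimilar_def by blast
qed

end
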